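(* Let $C$ be a category with a variance $(E,M)$ and let $D$ be a category. Let $G\colon E\rightarrow D$ and $H\colon M\rightarrow D$ be (covariant) functors which are compatible, meaning: $G$ and $H$ agree on objects, and $$H(f^m)\,G(f^e) = G(f_e)\,H(f_m)$$ for every morphism $f$ of $C$. Then there exists a unique functor $F\colon C\rightarrow D$ whose restriction to $E$ is $G$ and whose restriction to $M$ is $H$.
   Context: A strict factorization system on a category $C$ is a pair $(E,M)$ of subcategories of $C$, both containing all objects of $C$, such that every morphism $f$ of $C$ factors uniquely as $f=me$ with $e$ a morphism of $E$ and $m$ a morphism of $M$. A variance on $C$ is a pair $(E,M)$ such that both $(E,M)$ and $(M,E)$ are strict factorization systems on $C$. For a morphism $f\colon x\rightarrow y$ of $C$, write its unique factorizations as $f=f^m f^e$ with $f^e\colon x\rightarrow f_t$ in $E$ and $f^m\colon f_t\rightarrow y$ in $M$ (the terminating factorization), and $f=f_e f_m$ with $f_m\colon x\rightarrow f_s$ in $M$ and $f_e\colon f_s\rightarrow y$ in $E$ (the starting factorization). *)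

theory Defs
  imports Main
begin

text \<open>Categories given explicitly by a set of objects, a set of arrows,
domain, codomain, identities and composition (comp g f means g after f).\<close>

record ('o, 'a) cat =
  Obj  :: "'o set"
  Arr  :: "'a set"
  Dom  :: "'a \<Rightarrow> 'o"
  Cod  :: "'a \<Rightarrow> 'o"
  Idt  :: "'o \<Rightarrow> 'a"
  Comp :: "'a \<Rightarrow> 'a \<Rightarrow> 'a"

definition category :: "('o, 'a) cat \<Rightarrow> bool" where
  "category C \<longleftrightarrow>
     (\<forall>f\<in>Arr C. Dom C f \<in> Obj C \<and> Cod C f \<in> Obj C) \<and>
     (\<forall>x\<in>Obj C. Idt C x \<in> Arr C \<and> Dom C (Idt C x) = x \<and> Cod C (Idt C x) = x) \<and>
     (\<forall>f\<in>Arr C. \<forall>g\<in>Arr C. Cod C f = Dom C g \<longrightarrow>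
        Comp C g f \<in> Arr C \<and> Dom C (Comp C g f) = Dom C f \<and> Cod C (Comp C g f) = Cod C g) \<and>
     (\<forall>f\<in>Arr C. Comp C f (Idt C (Dom C f)) = f \<and> Comp C (Idt C (Cod C f)) f = f) \<and>
     (\<forall>f\<in>Arr C. \<forall>g\<in>Arr C. \<forall>h\<in>Arr C. Cod C f = Dom C g \<longrightarrow> Cod C g = Dom C h \<longrightarrow>
        Comp C h (Comp C g f) = Comp C (Comp C h g) f)"

definition wide_subcat :: "('o, 'a) cat \<Rightarrow> 'a set \<Rightarrow> bool" where
  "wide_subcat C S \<longleftrightarrow> S \<subseteq> Arr C \<and> (\<forall>x\<in>Obj C. Idt C x \<in> S) \<and>
     (\<forall>f\<in>S. \<forall>g\<in>S. Cod C f = Dom C g \<longrightarrow> Comp C g f \<in> S)"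

definition strict_fact_sys :: "('o, 'a) cat \<Rightarrow> 'a set \<Rightarrow> 'a set \<Rightarrow> bool" where
  "strict_fact_sys C E M \<longleftrightarrow> wide_subcat C E \<and> wide_subcat C M \<and>
     (\<forall>f\<in>Arr C. \<exists>!p. fst p \<in> E \<and> snd p \<in> M \<and> Cod C (fst p) = Dom C (snd p)
                        \<and> f = Comp C (snd p) (fst p))"

definition variance :: "('o, 'a) cat \<Rightarrow> 'a set \<Rightarrow> 'a set \<Rightarrow> bool" where
  "variance C E M \<longleftrightarrow> strict_fact_sys C E M \<and> strict_fact_sys C M E"

text \<open>Terminating factorization f = f^m f^e (f^e in E, f^m in M):
  tfact returns the pair (f^e, f^m).\<close>
definition tfact :: "('o, 'a) cat \<Rightarrow> 'a set \<Rightarrow> 'a set \<Rightarrow> 'a \<Rightarrow> 'a \<times> 'a" where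
  "tfact C E M f = (THE p. fst p \<in> E \<and> snd p \<in> M \<and> Cod C (fst p) = Dom C (snd p)
                        \<and> f = Comp C (snd p) (fst p))"

text \<open>Starting factorization f = f_e f_m (f_m in M, f_e in E):
  sfact returns the pair (f_m, f_e).\<close>
definition sfact :: "('o, 'a) cat \<Rightarrow> 'a set \<Rightarrow> 'a set \<Rightarrow> 'a \<Rightarrow> 'a \<times> 'a" where
  "sfact C E M f = (THE p. fst p \<in> M \<and> snd p \<in> E \<and> Cod C (fst p) = Dom C (snd p)
                        \<and> f = Comp C (snd p) (fst p))"

text \<open>A functor from the wide subcategory S of C (S = Arr C gives a functor C \<rightarrow> D),
  given by an object map Fo and an arrow map Fa.\<close>
definition functor_on ::
  "('o, 'a) cat \<Rightarrow> 'a set \<Rightarrow> ('p, 'b) cat \<Rightarrow> ('o \<Rightarrow> 'p) \<Rightarrow> ('a \<Rightarrow> 'b) \<Rightarrow> bool" where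
  "functor_on C S D Fo Fa \<longleftrightarrow>
     (\<forall>x\<in>Obj C. Fo x \<in> Obj D \<and> Fa (Idt C x) = Idt D (Fo x)) \<and>
     (\<forall>f\<in>S. Fa f \<in> Arr D \<and> Dom D (Fa f) = Fo (Dom C f) \<and> Cod D (Fa f) = Fo (Cod C f)) \<and>
     (\<forall>f\<in>S. \<forall>g\<in>S. Cod C f = Dom C g \<longrightarrow> Fa (Comp C g f) = Comp D (Fa g) (Fa f))"

end

theory Submission
  imports Defs
begin

text \<open>The glued functor sends f to H(f^m) G(f^e). To see that it preserves a composite g f, let
  h^m h^e be the terminating factorization of the middle arrow g^e f^m; then the terminating
  factorization of g f is (g^m h^m) (h^e f^e). The starting factorization of g^e f^m is
  (f^m, g^e) itself, so compatibility at g^e f^m replaces H(h^m) G(h^e) by G(g^e) H(f^m), and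
  H(g^m h^m) G(h^e f^e) regroups to H(g^m) G(g^e) H(f^m) G(f^e). Uniqueness holds because any
  functor must send f = f^m f^e to the composite of the images of f^m and f^e.\<close>

lemma Dom_in_Obj: "category C \<Longrightarrow> f \<in> Arr C \<Longrightarrow> Dom C f \<in> Obj C"
  and Cod_in_Obj: "category C \<Longrightarrow> f \<in> Arr C \<Longrightarrow> Cod C f \<in> Obj C"
  and Dom_Idt: "category C \<Longrightarrow> x \<in> Obj C \<Longrightarrow> Dom C (Idt C x) = x"
  and Cod_Idt: "category C \<Longrightarrow> x \<in> Obj C \<Longrightarrow> Cod C (Idt C x) = x"
  unfolding category_def by blast+

lemma Comp_in_Arr:
    "category C \<Longrightarrow> f \<in> Arr C \<Longrightarrow> g \<in> Arr C \<Longrightarrow> Cod C f = Dom C g \<Longrightarrow> Comp C g f \<in> Arr C"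
  and Dom_Comp:
    "category C \<Longrightarrow> f \<in> Arr C \<Longrightarrow> g \<in> Arr C \<Longrightarrow> Cod C f = Dom C g \<Longrightarrow> Dom C (Comp C g f) = Dom C f"
  and Cod_Comp:
    "category C \<Longrightarrow> f \<in> Arr C \<Longrightarrow> g \<in> Arr C \<Longrightarrow> Cod C f = Dom C g \<Longrightarrow> Cod C (Comp C g f) = Cod C g"
  unfolding category_def by blast+

lemma Comp_Idt_Dom: "category C \<Longrightarrow> f \<in> Arr C \<Longrightarrow> Comp C f (Idt C (Dom C f)) = f"
  and Comp_Idt_Cod: "category C \<Longrightarrow> f \<in> Arr C \<Longrightarrow> Comp C (Idt C (Cod C f)) f = f"
  unfolding category_def by blast+

lemma Comp_assoc:
  "category C \<Longrightarrow> f \<in> Arr C \<Longrightarrow> g \<in> Arr C \<Longrightarrow> h \<in> Arr C \<Longrightarrow>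
   Cod C f = Dom C g \<Longrightarrow> Cod C g = Dom C h \<Longrightarrow>
   Comp C h (Comp C g f) = Comp C (Comp C h g) f"
  unfolding category_def by blast

lemma Comp_Comp_reassoc:
  assumes "category C" "a \<in> Arr C" "b \<in> Arr C" "c \<in> Arr C" "d \<in> Arr C"
    and "Cod C d = Dom C c" "Cod C c = Dom C b" "Cod C b = Dom C a"
  shows "Comp C (Comp C a b) (Comp C c d) = Comp C a (Comp C (Comp C b c) d)"
  using assms by (simp add: Comp_assoc Comp_in_Arr Dom_Comp Cod_Comp)

lemma wide_subcat_Arr: "wide_subcat C S \<Longrightarrow> f \<in> S \<Longrightarrow> f \<in> Arr C"
  and wide_subcat_Idt: "wide_subcat C S \<Longrightarrow> x \<in> Obj C \<Longrightarrow> Idt C x \<in> S"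
  and wide_subcat_Comp:
    "wide_subcat C S \<Longrightarrow> f \<in> S \<Longrightarrow> g \<in> S \<Longrightarrow> Cod C f = Dom C g \<Longrightarrow> Comp C g f \<in> S"
  unfolding wide_subcat_def by blast+

lemma strict_fact_sys_wide_subcat:
  "strict_fact_sys C E M \<Longrightarrow> wide_subcat C E"
  "strict_fact_sys C E M \<Longrightarrow> wide_subcat C M"
  unfolding strict_fact_sys_def by blast+

lemma strict_fact_sys_in_Arr:
  "strict_fact_sys C E M \<Longrightarrow> e \<in> E \<Longrightarrow> e \<in> Arr C"
  "strict_fact_sys C E M \<Longrightarrow> m \<in> M \<Longrightarrow> m \<in> Arr C"
  by (meson strict_fact_sys_wide_subcat wide_subcat_Arr)+

lemma sfact_eq_tfact: "sfact C E M = tfact C M E"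
  unfolding sfact_def tfact_def by simp

lemma tfact_factorization:
  assumes "strict_fact_sys C E M" "f \<in> Arr C" "tfact C E M f = (e, m)"
  shows "e \<in> E" "m \<in> M" "Cod C e = Dom C m" "Comp C m e = f"
proof -
  have "\<exists>!p. fst p \<in> E \<and> snd p \<in> M \<and> Cod C (fst p) = Dom C (snd p) \<and> f = Comp C (snd p) (fst p)"
    using assms(1,2) unfolding strict_fact_sys_def by blast
  from theI'[OF this] assms(3) show "e \<in> E" "m \<in> M" "Cod C e = Dom C m" "Comp C m e = f"
    unfolding tfact_def by simp_all
qed

lemma tfact_eqI:
  assumes "category C" "strict_fact_sys C E M" "e \<in> E" "m \<in> M" "Cod C e = Dom C m"
  shows "tfact C E M (Comp C m e) = (e, m)"
proof -
  have "e \<in> Arr C" "m \<in> Arr C"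
    using assms(2-4) by (simp_all add: strict_fact_sys_in_Arr)
  then have "Comp C m e \<in> Arr C"
    using assms(1,5) by (simp add: Comp_in_Arr)
  then have "\<exists>!p. fst p \<in> E \<and> snd p \<in> M \<and> Cod C (fst p) = Dom C (snd p)
                  \<and> Comp C m e = Comp C (snd p) (fst p)"
    using assms(2) unfolding strict_fact_sys_def by blast
  from the1_equality[OF this, of "(e, m)"] show ?thesis
    using assms(3-5) unfolding tfact_def by simp
qed

lemma tfact_Dom_Cod:
  assumes "category C" "strict_fact_sys C E M" "f \<in> Arr C" "tfact C E M f = (e, m)"
  shows "Dom C e = Dom C f" "Cod C m = Cod C f"
proof -
  note fact = tfact_factorization[OF assms(2-4)]
  have "e \<in> Arr C" "m \<in> Arr C"
    using fact(1,2) assms(2) by (simp_all add: strict_fact_sys_in_Arr)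
  then show "Dom C e = Dom C f" "Cod C m = Cod C f"
    using fact(3,4) Dom_Comp[OF assms(1)] Cod_Comp[OF assms(1)] by metis+
qed

lemma tfact_in_E:
  assumes C: "category C" and EM: "strict_fact_sys C E M" and e: "e \<in> E"
  shows "tfact C E M e = (e, Idt C (Cod C e))"
proof -
  have "e \<in> Arr C"
    using EM e by (simp add: strict_fact_sys_in_Arr)
  then have "Idt C (Cod C e) \<in> M" and "Cod C e = Dom C (Idt C (Cod C e))"
    and "Comp C (Idt C (Cod C e)) e = e"
    using C EM by (simp_all add: Cod_in_Obj strict_fact_sys_wide_subcat wide_subcat_Idt Dom_Idt
        Comp_Idt_Cod)
  with tfact_eqI[OF C EM e] show ?thesis
    by metis
qed

lemma tfact_in_M:
  assumes C: "category C" and EM: "strict_fact_sys C E M" and m: "m \<in> M"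
  shows "tfact C E M m = (Idt C (Dom C m), m)"
proof -
  have "m \<in> Arr C"
    using EM m by (simp add: strict_fact_sys_in_Arr)
  then have "Idt C (Dom C m) \<in> E" and "Cod C (Idt C (Dom C m)) = Dom C m"
    and "Comp C m (Idt C (Dom C m)) = m"
    using C EM by (simp_all add: Dom_in_Obj strict_fact_sys_wide_subcat wide_subcat_Idt Cod_Idt
        Comp_Idt_Dom)
  with tfact_eqI[OF C EM _ m] show ?thesis
    by metis
qed

lemma tfact_Comp:
  assumes C: "category C" and EM: "strict_fact_sys C E M"
    and f: "f \<in> Arr C" and g: "g \<in> Arr C" and fg: "Cod C f = Dom C g"
    and tf: "tfact C E M f = (e1, m1)" and tg: "tfact C E M g = (e2, m2)"
    and th: "tfact C E M (Comp C e2 m1) = (e3, m3)"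
  shows "tfact C E M (Comp C g f) = (Comp C e3 e1, Comp C m2 m3)"
proof -
  note wide = strict_fact_sys_wide_subcat[OF EM]
  note F = tfact_factorization[OF EM f tf] tfact_Dom_Cod[OF C EM f tf]
  note G = tfact_factorization[OF EM g tg] tfact_Dom_Cod[OF C EM g tg]
  have arr: "e1 \<in> Arr C" "m1 \<in> Arr C" "e2 \<in> Arr C" "m2 \<in> Arr C"
    using EM F G by (simp_all add: strict_fact_sys_in_Arr)
  have mid: "Cod C m1 = Dom C e2"
    using F G fg by simp
  have h: "Comp C e2 m1 \<in> Arr C"
    using C arr mid by (simp add: Comp_in_Arr)
  note H = tfact_factorization[OF EM h th] tfact_Dom_Cod[OF C EM h th]
  have arr': "e3 \<in> Arr C" "m3 \<in> Arr C"
    using EM H by (simp_all add: strict_fact_sys_in_Arr)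
  have dom: "Cod C e1 = Dom C e3" and cod: "Cod C m3 = Dom C m2"
    using H F G C arr mid by (simp_all add: Dom_Comp Cod_Comp)
  have "Comp C g f = Comp C (Comp C m2 e2) (Comp C m1 e1)"
    using F(4) G(4) by simp
  also have "\<dots> = Comp C m2 (Comp C (Comp C e2 m1) e1)"
    by (rule Comp_Comp_reassoc) (use C arr F G mid in auto)
  also have "\<dots> = Comp C m2 (Comp C (Comp C m3 e3) e1)"
    using H(4) by simp
  also have "\<dots> = Comp C (Comp C m2 m3) (Comp C e3 e1)"
    by (rule Comp_Comp_reassoc[symmetric]) (use C arr arr' H dom cod in auto)
  finally have gf: "Comp C g f = Comp C (Comp C m2 m3) (Comp C e3 e1)" .
  have "Comp C e3 e1 \<in> E" "Comp C m2 m3 \<in> M"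
    using wide F G H dom cod by (simp_all add: wide_subcat_Comp)
  moreover have "Cod C (Comp C e3 e1) = Dom C (Comp C m2 m3)"
    using C arr arr' H dom cod by (simp add: Dom_Comp Cod_Comp)
  ultimately show ?thesis
    unfolding gf by (rule tfact_eqI[OF C EM])
qed

lemma functor_on_Obj: "functor_on C S D Fo Fa \<Longrightarrow> x \<in> Obj C \<Longrightarrow> Fo x \<in> Obj D"
  and functor_on_Idt: "functor_on C S D Fo Fa \<Longrightarrow> x \<in> Obj C \<Longrightarrow> Fa (Idt C x) = Idt D (Fo x)"
  and functor_on_Arr: "functor_on C S D Fo Fa \<Longrightarrow> f \<in> S \<Longrightarrow> Fa f \<in> Arr D"
  and functor_on_Dom: "functor_on C S D Fo Fa \<Longrightarrow> f \<in> S \<Longrightarrow> Dom D (Fa f) = Fo (Dom C f)"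
  and functor_on_Cod: "functor_on C S D Fo Fa \<Longrightarrow> f \<in> S \<Longrightarrow> Cod D (Fa f) = Fo (Cod C f)"
  and functor_on_Comp: "functor_on C S D Fo Fa \<Longrightarrow> f \<in> S \<Longrightarrow> g \<in> S \<Longrightarrow> Cod C f = Dom C g \<Longrightarrow>
         Fa (Comp C g f) = Comp D (Fa g) (Fa f)"
  unfolding functor_on_def by blast+

lemma functor_on_cong_Obj:
  assumes "functor_on C S D Fo Fa" "category C" "S \<subseteq> Arr C" "\<forall>x\<in>Obj C. Fo x = Fo' x"
  shows "functor_on C S D Fo' Fa"
proof -
  have "\<And>f. f \<in> S \<Longrightarrow> Dom C f \<in> Obj C \<and> Cod C f \<in> Obj C"
    using assms(2,3) by (blast intro: Dom_in_Obj Cod_in_Obj)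
  then show ?thesis
    using assms(1,4) unfolding functor_on_def by simp
qed

lemma functor_on_tfact:
  assumes "functor_on C (Arr C) D Fo Fa" "strict_fact_sys C E M" "f \<in> Arr C"
    and "tfact C E M f = (e, m)"
  shows "Fa f = Comp D (Fa m) (Fa e)"
proof -
  note fact = tfact_factorization[OF assms(2-4)]
  have "e \<in> Arr C" "m \<in> Arr C"
    using fact(1,2) assms(2) by (simp_all add: strict_fact_sys_in_Arr)
  then show ?thesis
    using functor_on_Comp[OF assms(1)] fact(3,4) by metis
qed

locale compatible_functors =
  fixes C :: "('o, 'a) cat" and D :: "('p, 'b) cat" and E M :: "'a set"
    and Fo :: "'o \<Rightarrow> 'p" and Ga Ha :: "'a \<Rightarrow> 'b"
  assumes C: "category C" and D: "category D" and variance: "variance C E M"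
    and G: "functor_on C E D Fo Ga" and H: "functor_on C M D Fo Ha"
    and compatible: "\<forall>f\<in>Arr C.
           Comp D (Ha (snd (tfact C E M f))) (Ga (fst (tfact C E M f)))
         = Comp D (Ga (snd (sfact C E M f))) (Ha (fst (sfact C E M f)))"
begin

lemma EM: "strict_fact_sys C E M" and ME: "strict_fact_sys C M E"
  using variance unfolding variance_def by simp_all

definition glue :: "'a \<Rightarrow> 'b" where
  "glue f = (case tfact C E M f of (e, m) \<Rightarrow> Comp D (Ha m) (Ga e))"

lemma glue_tfact: "tfact C E M f = (e, m) \<Longrightarrow> glue f = Comp D (Ha m) (Ga e)"
  unfolding glue_def by simp

lemma glue_in_E:
  assumes e: "e \<in> E"
  shows "glue e = Ga e"
proof -
  have "e \<in> Arr C"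
    using EM e by (simp add: strict_fact_sys_in_Arr)
  then have "Ha (Idt C (Cod C e)) = Idt D (Cod D (Ga e))"
    using C e by (simp add: functor_on_Idt[OF H] functor_on_Cod[OF G] Cod_in_Obj)
  then show ?thesis
    using D e by (simp add: glue_tfact tfact_in_E[OF C EM e] Comp_Idt_Cod functor_on_Arr[OF G])
qed

lemma glue_in_M:
  assumes m: "m \<in> M"
  shows "glue m = Ha m"
proof -
  have "m \<in> Arr C"
    using EM m by (simp add: strict_fact_sys_in_Arr)
  then have "Ga (Idt C (Dom C m)) = Idt D (Dom D (Ha m))"
    using C m by (simp add: functor_on_Idt[OF G] functor_on_Dom[OF H] Dom_in_Obj)
  then show ?thesis
    using D m by (simp add: glue_tfact tfact_in_M[OF C EM m] Comp_Idt_Dom functor_on_Arr[OF H])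
qed

lemma glue_Comp:
  assumes f: "f \<in> Arr C" and g: "g \<in> Arr C" and fg: "Cod C f = Dom C g"
  shows "glue (Comp C g f) = Comp D (glue g) (glue f)"
proof -
  obtain e1 m1 e2 m2 where tf: "tfact C E M f = (e1, m1)" and tg: "tfact C E M g = (e2, m2)"
    by (cases "tfact C E M f", cases "tfact C E M g") simp
  note F = tfact_factorization[OF EM f tf] tfact_Dom_Cod[OF C EM f tf]
  note G' = tfact_factorization[OF EM g tg] tfact_Dom_Cod[OF C EM g tg]
  have mid: "Cod C m1 = Dom C e2"
    using F G' fg by simp
  have h: "Comp C e2 m1 \<in> Arr C"
    using C EM F G' mid by (simp add: Comp_in_Arr strict_fact_sys_in_Arr)
  obtain e3 m3 where th: "tfact C E M (Comp C e2 m1) = (e3, m3)"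
    by (cases "tfact C E M (Comp C e2 m1)") simp
  note H' = tfact_factorization[OF EM h th] tfact_Dom_Cod[OF C EM h th]
  have arr: "e1 \<in> Arr C" "m1 \<in> Arr C" "e2 \<in> Arr C" "m2 \<in> Arr C"
    using EM F G' by (simp_all add: strict_fact_sys_in_Arr)
  have dc: "Cod C e1 = Dom C e3" "Cod C e3 = Dom C m3" "Cod C m3 = Dom C m2"
    using C H' F G' arr mid by (simp_all add: Dom_Comp Cod_Comp)
  note arrD = functor_on_Arr[OF G] functor_on_Arr[OF H]
  note dcD = functor_on_Dom[OF G] functor_on_Cod[OF G] functor_on_Dom[OF H] functor_on_Cod[OF H]
  have "sfact C E M (Comp C e2 m1) = (m1, e2)"
    unfolding sfact_eq_tfact using C ME F G' mid by (simp add: tfact_eqI)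
  then have swap: "Comp D (Ha m3) (Ga e3) = Comp D (Ga e2) (Ha m1)"
    using compatible h th by fastforce
  have "glue (Comp C g f) = Comp D (Ha (Comp C m2 m3)) (Ga (Comp C e3 e1))"
    using glue_tfact tfact_Comp[OF C EM f g fg tf tg th] by blast
  also have "\<dots> = Comp D (Comp D (Ha m2) (Ha m3)) (Comp D (Ga e3) (Ga e1))"
    using F G' H' dc by (simp add: functor_on_Comp[OF G] functor_on_Comp[OF H])
  also have "\<dots> = Comp D (Ha m2) (Comp D (Comp D (Ha m3) (Ga e3)) (Ga e1))"
    by (rule Comp_Comp_reassoc) (use D F G' H' dc arrD dcD in simp_all)
  also have "\<dots> = Comp D (Ha m2) (Comp D (Comp D (Ga e2) (Ha m1)) (Ga e1))"
    unfolding swap ..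
  also have "\<dots> = Comp D (Comp D (Ha m2) (Ga e2)) (Comp D (Ha m1) (Ga e1))"
    by (rule Comp_Comp_reassoc[symmetric]) (use D F G' mid arrD dcD in simp_all)
  also have "\<dots> = Comp D (glue g) (glue f)"
    using glue_tfact tf tg by simp
  finally show ?thesis .
qed

lemma functor_on_glue: "functor_on C (Arr C) D Fo glue"
  unfolding functor_on_def
proof (intro conjI ballI impI)
  fix x
  assume x: "x \<in> Obj C"
  then show "Fo x \<in> Obj D"
    by (rule functor_on_Obj[OF G])
  show "glue (Idt C x) = Idt D (Fo x)"
    using x C EM by (simp add: glue_in_E functor_on_Idt[OF G] strict_fact_sys_wide_subcat
        wide_subcat_Idt)
next
  fix f
  assume f: "f \<in> Arr C"
  obtain e m where tf: "tfact C E M f = (e, m)"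
    by (cases "tfact C E M f") simp
  note F = tfact_factorization[OF EM f tf] tfact_Dom_Cod[OF C EM f tf]
  have "Comp D (Ha m) (Ga e) \<in> Arr D \<and> Dom D (Comp D (Ha m) (Ga e)) = Fo (Dom C f)
        \<and> Cod D (Comp D (Ha m) (Ga e)) = Fo (Cod C f)"
    using D F by (simp add: Comp_in_Arr Dom_Comp Cod_Comp functor_on_Arr[OF G] functor_on_Arr[OF H]
        functor_on_Dom[OF G] functor_on_Cod[OF G] functor_on_Dom[OF H] functor_on_Cod[OF H])
  then show "glue f \<in> Arr D" "Dom D (glue f) = Fo (Dom C f)" "Cod D (glue f) = Fo (Cod C f)"
    using glue_tfact[OF tf] by simp_all
next
  show "\<And>f g. f \<in> Arr C \<Longrightarrow> g \<in> Arr C \<Longrightarrow> Cod C f = Dom C g \<Longrightarrow>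
          glue (Comp C g f) = Comp D (glue g) (glue f)"
    by (rule glue_Comp)
qed

lemma glue_unique:
  assumes "functor_on C (Arr C) D Fo' Fa'" "\<forall>e\<in>E. Fa' e = Ga e" "\<forall>m\<in>M. Fa' m = Ha m"
    and f: "f \<in> Arr C"
  shows "Fa' f = glue f"
proof -
  obtain e m where tf: "tfact C E M f = (e, m)"
    by (cases "tfact C E M f") simp
  then have "e \<in> E" "m \<in> M"
    using tfact_factorization[OF EM f] by simp_all
  then show ?thesis
    using assms functor_on_tfact[OF assms(1) EM f tf] glue_tfact[OF tf] by simp
qed

end

theorem mainTheorem1:
  fixes C :: "('o, 'a) cat" and D :: "('p, 'b) cat"
    and E M :: "'a set"
    and Go Ho :: "'o \<Rightarrow> 'p" and Ga Ha :: "'a \<Rightarrow> 'b"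
  assumes "category C" and "category D"
    and "variance C E M"
    and "functor_on C E D Go Ga"
    and "functor_on C M D Ho Ha"
    and "\<forall>x\<in>Obj C. Go x = Ho x"
    and "\<forall>f\<in>Arr C.
           Comp D (Ha (snd (tfact C E M f))) (Ga (fst (tfact C E M f)))
         = Comp D (Ga (snd (sfact C E M f))) (Ha (fst (sfact C E M f)))"
  shows "\<exists>Fo Fa. functor_on C (Arr C) D Fo Fa
            \<and> (\<forall>x\<in>Obj C. Fo x = Go x) \<and> (\<forall>f\<in>E. Fa f = Ga f)
            \<and> (\<forall>x\<in>Obj C. Fo x = Ho x) \<and> (\<forall>f\<in>M. Fa f = Ha f)
            \<and> (\<forall>Fo' Fa'. functor_on C (Arr C) D Fo' Fa'
                 \<and> (\<forall>x\<in>Obj C. Fo' x = Go x) \<and> (\<forall>f\<in>E. Fa' f = Ga f)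
                 \<and> (\<forall>x\<in>Obj C. Fo' x = Ho x) \<and> (\<forall>f\<in>M. Fa' f = Ha f)
                 \<longrightarrow> (\<forall>x\<in>Obj C. Fo' x = Fo x) \<and> (\<forall>f\<in>Arr C. Fa' f = Fa f))"
proof -
  have "M \<subseteq> Arr C"
    using assms(3) unfolding variance_def by (blast intro: strict_fact_sys_in_Arr)
  then have "functor_on C M D Go Ha"
    using functor_on_cong_Obj[OF assms(5,1)] assms(6) by simp
  then interpret compatible_functors C D E M Go Ga Ha
    using assms by unfold_locales
  show ?thesis
  proof (intro exI conjI allI impI)
    show "functor_on C (Arr C) D Go glue"
      by (rule functor_on_glue)
  qed (use glue_in_E glue_in_M glue_unique assms(6) in auto)
qed

end
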